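(* Let $K$ be a field and $E$ a row-finite graph with a fixed choice of special edges. Let $x$ and $x'$ be cycles in $E$ which have no common vertex. Then the right $L(E)$-modules $W(F_x,\phi_x)$ and $W(F_{x'},\phi_{x'})$ are not isomorphic.
   Context: Let $E=(E^0,E^1,s,r)$ be a row-finite directed graph. A vertex is regular if it emits at least one edge. For every regular vertex $v$ a fixed edge $e^v\in s^{-1}(v)$ is chosen; these are called special, all other edges nonspecial. A path of length $n\ge 1$ is a word $y_1\dots y_n$ of edges with $r(y_i)=s(y_{i+1})$; a path of length $0$ is a vertex. A cycle is a path $x_1\dots x_m$ of length $\ge1$ with $s(x_1)=r(x_m)$ and $s(x_i)\ne s(x_j)$ for $i\neq j$. The double graph $E_d$ has vertex set $E^0$ and edges $\{e,e^*: e\in E^1\}$ with $s_d(e)=s(e)$, $r_d(e)=r(e)$, $s_d(e^* )=r(e)$, $r_d(e^* )=s(e)$; the $e$ are real, the $e^*$ ghost edges. For a path $p=e_1\dots e_n$ in $E$ set $p^*=e_n^*\dots e_1^*$. The set $X$ of basis paths consists of the following paths in $E_d$: all vertices; all $p$ and $p^*$ with $p$ a path of length $\ge1$ in $E$; all $pq^*$ with $p=e_1\dots e_k$, $q=f_1\dots f_n$ paths of length $\ge 1$ in $E$, $r(p)=r(q)$, and either $e_k\ne f_n$ or $e_k=f_n$ nonspecial. The Leavitt path algebra $L(E)$ over $K$ is generated by $\{v,e,e^*: v\in E^0,e\in E^1\}$ subject to $uv=\delta_{uv}u$; $s(e)e=e=er(e)$, $r(e)e^*=e^*=e^*s(e)$;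 $e^*f=\delta_{ef}r(e)$; $\sum_{e\in s^{-1}(v)}ee^*=v$ for regular $v$. For a cycle $x=x_1\dots x_m$ in $E$ (a closed path in $E_d$ of real edges) and $1\le i\le m$, let $X_i$ be the set of basis paths $y=y_1\dots y_n$ with $n\ge1$ such that $x_iy_1$ is a basis path and $y_1\ne x_{i+1}$ ($x_{m+1}=x_1$). The graph $F_x$ has distinct vertices $w_i$ ($1\le i\le m$) and $w_{i,y}$ ($y\in X_i$), and edges $f_i$ from $w_{i-1}$ to $w_i$ ($w_0=w_m$) and $f_{i,y}$ with range $w_{i,y}$ and source $w_i$ if $|y|=1$, resp. $w_{i,y_1\dots y_{n-1}}$ if $n\ge 2$. The homomorphism $\phi_x:F_x\to E_d$: $\phi_x(w_i)=r_d(x_i)$, $\phi_x(w_{i,y})=r_d(y)$, $\phi_x(f_i)=x_i$, $\phi_x(f_{i,y})=$ last edge of $y$. $W(F,\phi)$ is the $K$-vector space with basis $F^0$ with the right $L(E)$-action on $w\in F^0$: $w.v=w$ if $\phi(w)=v$, else $0$; $w.e=r(f)$ if some $f\in s^{-1}(w)$ has $\phi(f)=e$, $w.e=s(f)$ if some $f\in r^{-1}(w)$ has $\phi(f)=e^*$, else $0$; $w.e^*=r(f)$ if some $f\in s^{-1}(w)$ has $\phi(f)=e^*$, $w.e^*=s(f)-T$ if $e$ is special and some $f\in r^{-1}(w)$ has $\phi(f)=e$, where $T=\sum r(p)$ over all paths $p$ in $F$ starting at $s(f)$ with $\phi(p)=dd^*$ for some $d\in s^{-1}(s(e))\setminus\{e\}$,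 else $0$. *)

theory Defs
  imports Main
begin

record ('v,'e) graph =
  verts :: "'v set"
  edges :: "'e set"
  src   :: "'e \<Rightarrow> 'v"
  rng   :: "'e \<Rightarrow> 'v"

definition wf_graph :: "('v,'e) graph \<Rightarrow> bool" where
  "wf_graph G \<longleftrightarrow> (\<forall>e\<in>edges G. src G e \<in> verts G \<and> rng G e \<in> verts G)"

definition row_finite :: "('v,'e) graph \<Rightarrow> bool" where
  "row_finite G \<longleftrightarrow> (\<forall>v\<in>verts G. finite {e\<in>edges G. src G e = v})"

definition regular :: "('v,'e) graph \<Rightarrow> 'v \<Rightarrow> bool" where
  "regular G v \<longleftrightarrow> (\<exists>e\<in>edges G. src G e = v)"

definition special_choice :: "('v,'e) graph \<Rightarrow> ('v \<Rightarrow> 'e) \<Rightarrow> bool" where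
  "special_choice G sp \<longleftrightarrow>
     (\<forall>v\<in>verts G. regular G v \<longrightarrow> sp v \<in> edges G \<and> src G (sp v) = v)"

definition special :: "('v,'e) graph \<Rightarrow> ('v \<Rightarrow> 'e) \<Rightarrow> 'e \<Rightarrow> bool" where
  "special G sp e \<longleftrightarrow> e = sp (src G e)"

definition is_path :: "('v,'e) graph \<Rightarrow> 'e list \<Rightarrow> bool" where
  "is_path G p \<longleftrightarrow> p \<noteq> [] \<and> set p \<subseteq> edges G \<and>
     (\<forall>i. Suc i < length p \<longrightarrow> rng G (p ! i) = src G (p ! Suc i))"

definition is_cycle :: "('v,'e) graph \<Rightarrow> 'e list \<Rightarrow> bool" where
  "is_cycle G x \<longleftrightarrow> is_path G x \<and> src G (hd x) = rng G (last x) \<and>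
     inj_on (\<lambda>i. src G (x ! i)) {..<length x}"

datatype 'e dedge = Real 'e | Ghost 'e

fun dedge_of :: "'e dedge \<Rightarrow> 'e" where
  "dedge_of (Real e) = e" | "dedge_of (Ghost e) = e"

fun dsrc :: "('v,'e) graph \<Rightarrow> 'e dedge \<Rightarrow> 'v" where
  "dsrc G (Real e) = src G e" | "dsrc G (Ghost e) = rng G e"

fun drng :: "('v,'e) graph \<Rightarrow> 'e dedge \<Rightarrow> 'v" where
  "drng G (Real e) = rng G e" | "drng G (Ghost e) = src G e"

definition is_dpath :: "('v,'e) graph \<Rightarrow> 'e dedge list \<Rightarrow> bool" where
  "is_dpath G w \<longleftrightarrow> w \<noteq> [] \<and> (\<forall>a\<in>set w. dedge_of a \<in> edges G) \<and>
     (\<forall>i. Suc i < length w \<longrightarrow> drng G (w ! i) = dsrc G (w ! Suc i))"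

text \<open>Basis paths of length at least 1: p, q^*, or p q^* with the stated condition
  on the last edges of p and q (q^* = map Ghost (rev q)).\<close>
definition basis_word :: "('v,'e) graph \<Rightarrow> ('v \<Rightarrow> 'e) \<Rightarrow> 'e dedge list \<Rightarrow> bool" where
  "basis_word G sp w \<longleftrightarrow> is_dpath G w \<and>
     (\<exists>p q. w = map Real p @ map Ghost (rev q) \<and>
        (p \<noteq> [] \<and> q \<noteq> [] \<longrightarrow> last p \<noteq> last q \<or> \<not> special G sp (last p)))"

text \<open>Cycle x = x_1 ... x_m is the list x, x_i = x ! (i - 1).  The set X_i:\<close>
definition Xset :: "('v,'e) graph \<Rightarrow> ('v \<Rightarrow> 'e) \<Rightarrow> 'e list \<Rightarrow> nat \<Rightarrow> 'e dedge list set" where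
  "Xset G sp x i = {y. basis_word G sp y \<and> basis_word G sp [Real (x ! (i - 1)), hd y]
                       \<and> hd y \<noteq> Real (x ! (i mod length x))}"

datatype 'e fvert = FW nat | FWy nat "'e dedge list"
datatype 'e fedge = Ff nat | Ffy nat "'e dedge list"

fun Fx_src :: "'e list \<Rightarrow> 'e fedge \<Rightarrow> 'e fvert" where
  "Fx_src x (Ff i) = FW (if i = 1 then length x else i - 1)"
| "Fx_src x (Ffy i y) = (if length y = 1 then FW i else FWy i (butlast y))"

fun Fx_rng :: "'e fedge \<Rightarrow> 'e fvert" where
  "Fx_rng (Ff i) = FW i"
| "Fx_rng (Ffy i y) = FWy i y"

definition Fx_graph :: "('v,'e) graph \<Rightarrow> ('v \<Rightarrow> 'e) \<Rightarrow> 'e list \<Rightarrow> ('e fvert, 'e fedge) graph" where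
  "Fx_graph G sp x =
     \<lparr> verts = {FW i | i. 1 \<le> i \<and> i \<le> length x}
               \<union> {FWy i y | i y. 1 \<le> i \<and> i \<le> length x \<and> y \<in> Xset G sp x i},
       edges = {Ff i | i. 1 \<le> i \<and> i \<le> length x}
               \<union> {Ffy i y | i y. 1 \<le> i \<and> i \<le> length x \<and> y \<in> Xset G sp x i},
       src = Fx_src x,
       rng = Fx_rng \<rparr>"

fun Fx_phiV :: "('v,'e) graph \<Rightarrow> 'e list \<Rightarrow> 'e fvert \<Rightarrow> 'v" where
  "Fx_phiV G x (FW i) = rng G (x ! (i - 1))"
| "Fx_phiV G x (FWy i y) = drng G (last y)"

fun Fx_phiE :: "'e list \<Rightarrow> 'e fedge \<Rightarrow> 'e dedge" where
  "Fx_phiE x (Ff i) = Real (x ! (i - 1))"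
| "Fx_phiE x (Ffy i y) = last y"

text \<open>Generators of L(E): vertices v, real edges e, ghost edges e^*.\<close>
datatype ('v,'e) gen = GV 'v | GE 'e | GG 'e

definition gens :: "('v,'e) graph \<Rightarrow> ('v,'e) gen set" where
  "gens G = GV ` verts G \<union> GE ` edges G \<union> GG ` edges G"

text \<open>Elements of W(F,phi): finite K-linear combinations of vertices of F.\<close>
definition Wvec :: "'k::field itself \<Rightarrow> ('a,'b) graph \<Rightarrow> ('a \<Rightarrow> 'k) set" where
  "Wvec K F = {m. finite {w. m w \<noteq> 0} \<and> {w. m w \<noteq> 0} \<subseteq> verts F}"

definition delta :: "'a \<Rightarrow> 'a \<Rightarrow> 'k::field" where
  "delta w = (\<lambda>u. if u = w then 1 else 0)"

definition Tterm :: "('v,'e) graph \<Rightarrow> ('a,'b) graph \<Rightarrow> ('b \<Rightarrow> 'e dedge)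
                      \<Rightarrow> 'e \<Rightarrow> 'b \<Rightarrow> 'a \<Rightarrow> 'k::field" where
  "Tterm E F phiE e f = (\<lambda>u. \<Sum>p\<in>{p. is_path F p \<and> src F (hd p) = src F f \<and>
        (\<exists>d\<in>edges E. src E d = src E e \<and> d \<noteq> e \<and> map phiE p = [Real d, Ghost d])}.
        delta (rng F (last p)) u)"

definition act_basis :: "'k::field itself \<Rightarrow> ('v,'e) graph \<Rightarrow> ('v \<Rightarrow> 'e) \<Rightarrow> ('a,'b) graph
     \<Rightarrow> ('a \<Rightarrow> 'v) \<Rightarrow> ('b \<Rightarrow> 'e dedge) \<Rightarrow> 'a \<Rightarrow> ('v,'e) gen \<Rightarrow> 'a \<Rightarrow> 'k" where
  "act_basis K E sp F phiV phiE w g =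
    (case g of
       GV v \<Rightarrow> (if phiV w = v then delta w else (\<lambda>_. 0))
     | GE e \<Rightarrow>
         (if \<exists>f\<in>edges F. src F f = w \<and> phiE f = Real e
          then delta (rng F (SOME f. f \<in> edges F \<and> src F f = w \<and> phiE f = Real e))
          else if \<exists>f\<in>edges F. rng F f = w \<and> phiE f = Ghost e
          then delta (src F (SOME f. f \<in> edges F \<and> rng F f = w \<and> phiE f = Ghost e))
          else (\<lambda>_. 0))
     | GG e \<Rightarrow>
         (if \<exists>f\<in>edges F. src F f = w \<and> phiE f = Ghost e
          then delta (rng F (SOME f. f \<in> edges F \<and> src F f = w \<and> phiE f = Ghost e))
          else if special E sp e \<and> (\<exists>f\<in>edges F. rng F f = w \<and> phiE f = Real e)
          then (let f = (SOME f. f \<in> edges F \<and> rng F f = w \<and> phiE f = Real e)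
                in (\<lambda>u. delta (src F f) u - Tterm E F phiE e f u))
          else (\<lambda>_. 0)))"

definition mact :: "'k::field itself \<Rightarrow> ('v,'e) graph \<Rightarrow> ('v \<Rightarrow> 'e) \<Rightarrow> ('a,'b) graph
     \<Rightarrow> ('a \<Rightarrow> 'v) \<Rightarrow> ('b \<Rightarrow> 'e dedge) \<Rightarrow> ('a \<Rightarrow> 'k) \<Rightarrow> ('v,'e) gen \<Rightarrow> 'a \<Rightarrow> 'k" where
  "mact K E sp F phiV phiE m g =
     (\<lambda>u. \<Sum>w\<in>{w. m w \<noteq> 0}. m w * act_basis K E sp F phiV phiE w g u)"

text \<open>Isomorphism of right L(E)-modules W(F1,phi1) and W(F2,phi2): a K-linear bijection
  commuting with the action of the generators of L(E) (hence with all of L(E)).\<close>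
definition W_iso :: "'k::field itself \<Rightarrow> ('v,'e) graph \<Rightarrow> ('v \<Rightarrow> 'e)
     \<Rightarrow> ('a,'b) graph \<Rightarrow> ('a \<Rightarrow> 'v) \<Rightarrow> ('b \<Rightarrow> 'e dedge)
     \<Rightarrow> ('c,'d) graph \<Rightarrow> ('c \<Rightarrow> 'v) \<Rightarrow> ('d \<Rightarrow> 'e dedge) \<Rightarrow> bool" where
  "W_iso K E sp F1 phiV1 phiE1 F2 phiV2 phiE2 \<longleftrightarrow>
    (\<exists>h :: ('a \<Rightarrow> 'k) \<Rightarrow> ('c \<Rightarrow> 'k).
       bij_betw h (Wvec K F1) (Wvec K F2) \<and>
       (\<forall>m\<in>Wvec K F1. \<forall>n\<in>Wvec K F1. h (\<lambda>u. m u + n u) = (\<lambda>u. h m u + h n u)) \<and>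
       (\<forall>c. \<forall>m\<in>Wvec K F1. h (\<lambda>u. c * m u) = (\<lambda>u. c * h m u)) \<and>
       (\<forall>m\<in>Wvec K F1. \<forall>g\<in>gens E.
          h (mact K E sp F1 phiV1 phiE1 m g) = mact K E sp F2 phiV2 phiE2 (h m) g))"

end

theory Submission
  imports Defs
begin

text \<open>An isomorphism h from W(F_x) to W(F_x') carries the cycle vertices w_1, ..., w_m of F_x
  to vectors N_j with N_(j+1) = N_j . x_(j+1), periodic in j.  A real edge acts on a vertex
  of F_x' either by zero or by moving it to a single neighbour, so the supports of the N_j can
  only shrink along the orbit; periodicity forces every support vertex to be moved to a support
  vertex of the next vector.  The vertex idempotents put the supports over the vertices of x,
  hence (x and x' being disjoint) into the trees of F_x' hanging off its cycle.  A support vertex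
  of maximal depth there would have to be entered from its parent and then left again by real
  edges without going deeper, which the tree structure of F_x' forbids.\<close>

lemma delta_nonzero_iff: "(delta a u :: 'k::field) \<noteq> 0 \<longleftrightarrow> u = a"
  by (simp add: delta_def)

lemma delta_eq_iff: "(delta a :: 'a \<Rightarrow> 'k::field) = delta b \<longleftrightarrow> a = b"
proof
  assume "delta a = (delta b :: 'a \<Rightarrow> 'k)"
  then have "(delta b a :: 'k) \<noteq> 0" by (metis delta_nonzero_iff)
  then show "a = b" by (simp add: delta_nonzero_iff)
qed simp

lemma delta_neq_zero: "(delta a :: 'a \<Rightarrow> 'k::field) \<noteq> (\<lambda>_. 0)"
  by (metis delta_nonzero_iff)

lemma delta_in_Wvec: "w \<in> verts F \<Longrightarrow> delta w \<in> Wvec K F"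
  by (simp add: Wvec_def delta_nonzero_iff)

lemma mact_delta: "mact K E sp F phiV phiE (delta w) g = act_basis K E sp F phiV phiE w g"
  by (simp add: mact_def delta_nonzero_iff) (simp add: delta_def)

lemma mact_nonzeroE:
  assumes "mact K E sp F phiV phiE m g u \<noteq> 0"
  obtains w where "m w \<noteq> 0" and "act_basis K E sp F phiV phiE w g u \<noteq> 0"
proof -
  from assms obtain w where "w \<in> {w. m w \<noteq> 0}" "m w * act_basis K E sp F phiV phiE w g u \<noteq> 0"
    unfolding mact_def by (rule sum.not_neutral_contains_not_neutral)
  then show thesis using that by simp
qed

lemma act_basis_GV:
  "act_basis K E sp F phiV phiE w (GV v) = (if phiV w = v then delta w else (\<lambda>_. 0))"
  unfolding act_basis_def by simp

lemma mact_GV_nonzero: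
  "mact K E sp F phiV phiE m (GV v) u \<noteq> 0 \<Longrightarrow> phiV u = v"
  by (erule mact_nonzeroE) (simp add: act_basis_GV delta_nonzero_iff split: if_splits)

lemma act_basis_GE:
  "act_basis K E sp F phiV phiE w (GE e) =
    (if \<exists>f\<in>edges F. src F f = w \<and> phiE f = Real e
     then delta (rng F (SOME f. f \<in> edges F \<and> src F f = w \<and> phiE f = Real e))
     else if \<exists>f\<in>edges F. rng F f = w \<and> phiE f = Ghost e
     then delta (src F (SOME f. f \<in> edges F \<and> rng F f = w \<and> phiE f = Ghost e))
     else (\<lambda>_. 0))"
  unfolding act_basis_def by simp

lemma act_basis_GE_cases:
  "act_basis K E sp F phiV phiE w (GE e) = (\<lambda>_. 0) \<or>
   (\<exists>f\<in>edges F. \<exists>a. act_basis K E sp F phiV phiE w (GE e) = delta a \<and>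
      (src F f = w \<and> rng F f = a \<and> phiE f = Real e \<or>
       rng F f = w \<and> src F f = a \<and> phiE f = Ghost e))"
proof -
  let ?out = "\<lambda>f. f \<in> edges F \<and> src F f = w \<and> phiE f = Real e"
  let ?inn = "\<lambda>f. f \<in> edges F \<and> rng F f = w \<and> phiE f = Ghost e"
  consider (out) "\<exists>f\<in>edges F. src F f = w \<and> phiE f = Real e"
    | (inn) "\<not> (\<exists>f\<in>edges F. src F f = w \<and> phiE f = Real e)"
      "\<exists>f\<in>edges F. rng F f = w \<and> phiE f = Ghost e"
    | (none) "\<not> (\<exists>f\<in>edges F. src F f = w \<and> phiE f = Real e)"
      "\<not> (\<exists>f\<in>edges F. rng F f = w \<and> phiE f = Ghost e)"
    by blast
  then show ?thesis
  proof cases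
    case out
    define f where "f = (SOME f. ?out f)"
    have "?out f" unfolding f_def by (rule someI_ex) (use out in blast)
    moreover have "act_basis K E sp F phiV phiE w (GE e) = delta (rng F f)"
      unfolding act_basis_GE if_P[OF out] f_def ..
    ultimately show ?thesis by (intro disjI2 bexI[of _ f] exI[of _ "rng F f"]) simp_all
  next
    case inn
    define f where "f = (SOME f. ?inn f)"
    have "?inn f" unfolding f_def by (rule someI_ex) (use inn(2) in blast)
    moreover have "act_basis K E sp F phiV phiE w (GE e) = delta (src F f)"
      unfolding act_basis_GE if_not_P[OF inn(1)] if_P[OF inn(2)] f_def ..
    ultimately show ?thesis by (intro disjI2 bexI[of _ f] exI[of _ "src F f"]) simp_all
  next
    case none
    then show ?thesis unfolding act_basis_GE if_not_P[OF none(1)] if_not_P[OF none(2)] by simp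
  qed
qed

lemma act_basis_GE_deltaE:
  fixes K :: "'k::field itself"
  assumes "act_basis K E sp F phiV phiE w (GE e) = delta a"
  obtains (out) f where "f \<in> edges F" "src F f = w" "rng F f = a" "phiE f = Real e"
    | (inn) f where "f \<in> edges F" "rng F f = w" "src F f = a" "phiE f = Ghost e"
proof -
  from act_basis_GE_cases[of K E sp F phiV phiE w e] obtain f a' where f: "f \<in> edges F"
    and a': "act_basis K E sp F phiV phiE w (GE e) = delta a'"
    and rel: "src F f = w \<and> rng F f = a' \<and> phiE f = Real e \<or>
      rng F f = w \<and> src F f = a' \<and> phiE f = Ghost e"
    using assms delta_neq_zero[of a, where 'k = 'k] by auto
  from a' assms have "a' = a" by (simp add: delta_eq_iff)
  with f rel that show thesis by blast
qed

lemma mact_GE_nonzero: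
  fixes K :: "'k::field itself"
  assumes "mact K E sp F phiV phiE m (GE e) u \<noteq> 0"
  obtains w where "m w \<noteq> 0" and "act_basis K E sp F phiV phiE w (GE e) = delta u"
proof -
  from assms obtain w where w: "m w \<noteq> 0" "act_basis K E sp F phiV phiE w (GE e) u \<noteq> 0"
    by (rule mact_nonzeroE)
  then obtain a where a: "act_basis K E sp F phiV phiE w (GE e) = delta a"
    using act_basis_GE_cases[of K E sp F phiV phiE w e] by auto
  with w have "a = u" by (simp add: delta_nonzero_iff)
  with w a show thesis using that by blast
qed

lemma act_basis_GE_unique_out:
  assumes "f0 \<in> edges F" "src F f0 = w" "phiE f0 = Real e"
    and "\<And>f. f \<in> edges F \<Longrightarrow> src F f = w \<Longrightarrow> phiE f = Real e \<Longrightarrow> rng F f = a"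
  shows "act_basis K E sp F phiV phiE w (GE e) = delta a"
proof -
  let ?out = "\<lambda>f. f \<in> edges F \<and> src F f = w \<and> phiE f = Real e"
  have ex: "\<exists>f\<in>edges F. src F f = w \<and> phiE f = Real e" using assms(1-3) by blast
  have "?out (SOME f. ?out f)" by (rule someI_ex) (use ex in blast)
  then show ?thesis unfolding act_basis_GE if_P[OF ex] using assms(4) by simp
qed

lemma periodic_mod_eq:
  fixes f :: "nat \<Rightarrow> 'a"
  assumes "\<And>j. f (j + L) = f j"
  shows "f j = f (j mod L)"
proof (induction j rule: less_induct)
  case (less j)
  show ?case
  proof (cases "j < L")
    case False
    then have "f j = f (j - L)" using assms[of "j - L"] by simp
    also have "\<dots> = f ((j - L) mod L)" using False less by (cases "L = 0") auto
    also have "(j - L) mod L = j mod L" using False by (simp add: le_mod_geq)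
    finally show ?thesis .
  qed simp
qed

lemma periodic_pushforward_onto:
  fixes S D :: "nat \<Rightarrow> 'a set" and f :: "nat \<Rightarrow> 'a \<Rightarrow> 'a"
  assumes fin: "\<And>j. finite (S j)" and per: "\<And>j. S (j + L) = S j" and "0 < L"
    and D: "\<And>j. D j \<subseteq> S j" and onto: "\<And>j. S (Suc j) \<subseteq> f j ` D j"
  shows "D j = S j" and "f j ` S j = S (Suc j)"
proof -
  have finD: "finite (D j)" for j by (rule finite_subset[OF D fin])
  have step: "card (S (Suc j)) \<le> card (f j ` D j)" "card (f j ` D j) \<le> card (D j)"
    "card (D j) \<le> card (S j)" for j
    using card_mono[OF finite_imageI[OF finD] onto] card_image_le[OF finD] card_mono[OF fin D]
    by auto
  have decr: "card (S (j + k)) \<le> card (S j)" for j k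
  proof (induction k)
    case (Suc k)
    then show ?case using step[of "j + k"] by simp
  qed simp
  have "card (S j) = card (S (Suc j + (L - 1)))" using per \<open>0 < L\<close> by simp
  also have "\<dots> \<le> card (S (Suc j))" by (rule decr)
  finally have tight: "card (S j) \<le> card (S (Suc j))" .
  show DS: "D j = S j" using tight step[of j] by (intro card_subset_eq[OF fin D]) linarith
  have "S (Suc j) = f j ` D j"
    using tight step[of j] by (intro card_seteq[OF finite_imageI[OF finD] onto]) linarith
  with DS show "f j ` S j = S (Suc j)" by simp
qed

lemma periodic_orbit_GE_delta:
  fixes N :: "nat \<Rightarrow> 'a \<Rightarrow> 'k::field"
  assumes W: "\<And>j. N j \<in> Wvec K F" and per: "\<And>j. N (j + L) = N j" and "0 < L"
    and orbit: "\<And>j. N (Suc j) = mact K E sp F phiV phiE (N j) (GE (es j))"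
    and "N j w \<noteq> 0"
  obtains a where "act_basis K E sp F phiV phiE w (GE (es j)) = delta a" and "N (Suc j) a \<noteq> 0"
proof -
  let ?act = "\<lambda>j w. act_basis K E sp F phiV phiE w (GE (es j))"
  define S where "S j = {u. N j u \<noteq> 0}" for j
  define D where "D j = {w \<in> S j. ?act j w \<noteq> (\<lambda>_. 0)}" for j
  define tgt where "tgt j w = (SOME a. ?act j w = delta a)" for j w
  have tgt: "?act j w = delta (tgt j w)" if "w \<in> D j" for j w
  proof -
    have "\<exists>a. ?act j w = delta a"
      using that act_basis_GE_cases[of K E sp F phiV phiE w "es j"] unfolding D_def by blast
    then show ?thesis unfolding tgt_def by (rule someI_ex)
  qed
  have onto: "S (Suc j) \<subseteq> tgt j ` D j" for j
  proof
    fix u assume "u \<in> S (Suc j)"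
    then have "mact K E sp F phiV phiE (N j) (GE (es j)) u \<noteq> 0"
      using orbit[of j] by (simp add: S_def)
    then obtain w where w: "N j w \<noteq> 0" "?act j w = delta u" by (rule mact_GE_nonzero)
    then have "w \<in> D j" unfolding D_def S_def by (simp add: delta_neq_zero)
    moreover have "tgt j w = u" using tgt[OF \<open>w \<in> D j\<close>] w(2) by (simp add: delta_eq_iff)
    ultimately show "u \<in> tgt j ` D j" by blast
  qed
  have fin: "finite (S j)" for j using W unfolding Wvec_def S_def by auto
  have per_S: "S (j + L) = S j" for j using per unfolding S_def by simp
  have D_sub: "D j \<subseteq> S j" for j unfolding D_def by auto
  note pushforward = periodic_pushforward_onto[of S L D tgt, OF fin per_S \<open>0 < L\<close> D_sub onto]
  have "w \<in> D j" using \<open>N j w \<noteq> 0\<close> pushforward(1) unfolding S_def by simp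
  moreover have "tgt j w \<in> S (Suc j)"
    using \<open>N j w \<noteq> 0\<close> pushforward(2)[of j] unfolding S_def by blast
  ultimately show thesis using tgt unfolding S_def by (intro that) simp_all
qed

lemma cycle_length_pos: "is_cycle E x \<Longrightarrow> 0 < length x"
  unfolding is_cycle_def is_path_def by simp

lemma cycle_edges: "is_cycle E x \<Longrightarrow> set x \<subseteq> edges E"
  unfolding is_cycle_def is_path_def by simp

lemma cycle_rng_subset_src:
  assumes "is_cycle E x"
  shows "rng E ` set x \<subseteq> src E ` set x"
proof
  fix v assume "v \<in> rng E ` set x"
  then obtain k where k: "k < length x" "v = rng E (x ! k)" by (metis imageE in_set_conv_nth)
  show "v \<in> src E ` set x"
  proof (cases "Suc k < length x")
    case True
    then have "v = src E (x ! Suc k)" using assms k unfolding is_cycle_def is_path_def by simp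
    then show ?thesis using True by simp
  next
    case False
    then have "k = length x - 1" "x \<noteq> []" using k by auto
    then have "x ! k = last x" by (simp add: last_conv_nth)
    then have "v = src E (hd x)" using assms k unfolding is_cycle_def by simp
    moreover have "src E (hd x) \<in> src E ` set x" using \<open>x \<noteq> []\<close> by (intro imageI hd_in_set)
    ultimately show ?thesis by simp
  qed
qed

lemma Fx_graph_simps [simp]:
  "verts (Fx_graph E sp x) = {FW i | i. 1 \<le> i \<and> i \<le> length x}
      \<union> {FWy i y | i y. 1 \<le> i \<and> i \<le> length x \<and> y \<in> Xset E sp x i}"
  "edges (Fx_graph E sp x) = {Ff i | i. 1 \<le> i \<and> i \<le> length x}
      \<union> {Ffy i y | i y. 1 \<le> i \<and> i \<le> length x \<and> y \<in> Xset E sp x i}"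
  "src (Fx_graph E sp x) = Fx_src x"
  "rng (Fx_graph E sp x) = Fx_rng"
  by (simp_all add: Fx_graph_def)

lemma Xset_nonempty: "y \<in> Xset E sp x i \<Longrightarrow> y \<noteq> []"
  unfolding Xset_def basis_word_def is_dpath_def by auto

lemma Fx_phiV_FW:
  assumes "is_cycle E x" and "FW i \<in> verts (Fx_graph E sp x)"
  shows "Fx_phiV E x (FW i) \<in> src E ` set x"
proof -
  have "i - 1 < length x" using assms(2) by auto
  then have "Fx_phiV E x (FW i) \<in> rng E ` set x" by simp
  then show ?thesis using cycle_rng_subset_src[OF assms(1)] by blast
qed

text \<open>The cycle vertex w_k of the paper is FW k with 1 \<le> k \<le> length x; indexing it as
  FW (Suc (j mod length x)) lets j run through all of nat.\<close>
lemma Fx_act_cycle_edge: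
  assumes "is_cycle E x"
  shows "act_basis K E sp (Fx_graph E sp x) (Fx_phiV E x) (Fx_phiE x)
           (FW (Suc (j mod length x))) (GE (x ! (Suc j mod length x)))
         = delta (FW (Suc (Suc j mod length x)))"
proof (rule act_basis_GE_unique_out)
  let ?L = "length x"
  have "0 < ?L" using cycle_length_pos[OF assms(1)] .
  then have prev: "(if Suc j mod ?L = 0 then ?L else Suc j mod ?L) = Suc (j mod ?L)"
    by (auto simp: mod_Suc)
  show "Ff (Suc (Suc j mod ?L)) \<in> edges (Fx_graph E sp x)"
    using \<open>0 < ?L\<close> by (simp add: Suc_leI)
  show "src (Fx_graph E sp x) (Ff (Suc (Suc j mod ?L))) = FW (Suc (j mod ?L))"
    using \<open>0 < ?L\<close> by (auto simp: mod_Suc)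
  show "Fx_phiE x (Ff (Suc (Suc j mod ?L))) = Real (x ! (Suc j mod ?L))" by simp
  fix f
  assume f: "f \<in> edges (Fx_graph E sp x)" "src (Fx_graph E sp x) f = FW (Suc (j mod ?L))"
    "Fx_phiE x f = Real (x ! (Suc j mod ?L))"
  show "rng (Fx_graph E sp x) f = FW (Suc (Suc j mod ?L))"
  proof (cases f)
    case (Ff i)
    then have "1 \<le> i" "i \<le> ?L" "(if i = 1 then ?L else i - 1) = Suc (j mod ?L)"
      using f by auto
    then have "i = Suc (Suc j mod ?L)" using prev \<open>0 < ?L\<close> by (auto simp: mod_Suc split: if_splits)
    then show ?thesis using Ff by simp
  next
    case (Ffy i y)
    then have y: "y \<in> Xset E sp x i" "length y = 1" "i = Suc (j mod ?L)"
        "last y = Real (x ! (Suc j mod ?L))"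
      using f by (auto split: if_splits)
    then have "hd y = Real (x ! (i mod ?L))" by (cases y) (auto simp: mod_Suc_eq)
    then show ?thesis using y(1) unfolding Xset_def by simp
  qed
qed

fun Fx_depth :: "'e fvert \<Rightarrow> nat" where
  "Fx_depth (FW i) = 0"
| "Fx_depth (FWy i y) = length y"

lemma Fx_edge_into_FWy:
  "Fx_rng f = FWy i y \<Longrightarrow> f = Ffy i y"
  by (cases f) simp_all

lemma Fx_edge_out_of_FWy:
  assumes "f \<in> edges (Fx_graph E sp x)" and "Fx_src x f = FWy i y"
  shows "Fx_depth (Fx_rng f) = Suc (length y)"
proof -
  obtain z where f: "f = Ffy i z" "length z \<noteq> 1" "butlast z = y"
    using assms(2) by (cases f) (auto split: if_splits)
  have "z \<noteq> []" using assms(1) unfolding f by (auto dest: Xset_nonempty)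
  with f show ?thesis by (cases z rule: rev_cases) auto
qed

text \<open>Real edges move a vertex off the cycle only to a child, or to its parent along the
  edge into it when that edge is ghost; so two consecutive real moves through such a vertex
  cannot both stay at depth at most its own.\<close>
lemma Fx_real_moves_through_FWy:
  fixes K :: "'k::field itself"
  assumes into: "act_basis K E sp (Fx_graph E sp x) (Fx_phiV E x) (Fx_phiE x) p (GE e)
      = delta (FWy i y)"
    and out_of: "act_basis K E sp (Fx_graph E sp x) (Fx_phiV E x) (Fx_phiE x) (FWy i y) (GE e')
      = delta q"
  shows "length y < Fx_depth p \<or> length y < Fx_depth q"
proof (rule ccontr)
  assume "\<not> ?thesis"
  then have shallow: "Fx_depth p \<le> length y" "Fx_depth q \<le> length y" by auto
  from into have "last y = Real e"
  proof (cases rule: act_basis_GE_deltaE)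
    case (out f)
    then show ?thesis using Fx_edge_into_FWy[of f i y] by simp
  next
    case (inn f)
    then show ?thesis using Fx_edge_out_of_FWy[of f E sp x i y] shallow(1) by simp
  qed
  moreover from out_of have "last y = Ghost e'"
  proof (cases rule: act_basis_GE_deltaE)
    case (out f)
    then show ?thesis using Fx_edge_out_of_FWy[of f E sp x i y] shallow(2) by simp
  next
    case (inn f)
    then show ?thesis using Fx_edge_into_FWy[of f i y] by simp
  qed
  ultimately show False by simp
qed

lemma Fx_no_periodic_orbit_off_cycle:
  fixes N :: "nat \<Rightarrow> 'e fvert \<Rightarrow> 'k::field"
  assumes W: "\<And>j. N j \<in> Wvec K (Fx_graph E sp x)"
    and per: "\<And>j. N (j + L) = N j" and "0 < L"
    and orbit: "\<And>j. N (Suc j) =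
      mact K E sp (Fx_graph E sp x) (Fx_phiV E x) (Fx_phiE x) (N j) (GE (es j))"
    and off_cycle: "\<And>j u. N j u \<noteq> 0 \<Longrightarrow> u \<notin> range FW"
    and "N 0 \<noteq> (\<lambda>_. 0)"
  shows False
proof -
  define U where "U = (\<Union>j<L. {u. N j u \<noteq> 0})"
  have "finite U" using W unfolding U_def Wvec_def by auto
  have in_U: "u \<in> U" if "N j u \<noteq> 0" for j u
    using that periodic_mod_eq[of N L j, OF per] \<open>0 < L\<close> unfolding U_def by auto
  have "U \<noteq> {}" using \<open>N 0 \<noteq> (\<lambda>_. 0)\<close> in_U by blast
  define M where "M = Max (Fx_depth ` U)"
  have below_M: "Fx_depth w \<le> M" if "N j w \<noteq> 0" for j w
    using \<open>finite U\<close> in_U[OF that] unfolding M_def by simp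
  have "M \<in> Fx_depth ` U" using \<open>finite U\<close> \<open>U \<noteq> {}\<close> unfolding M_def by simp
  then obtain u j where u: "N j u \<noteq> 0" and "Fx_depth u = M" unfolding U_def by blast
  obtain i y where u_eq: "u = FWy i y" using off_cycle[OF u] by (cases u) auto
  have "N (Suc (j + L - 1)) u \<noteq> 0" using u per[of j] \<open>0 < L\<close> by simp
  then obtain p where p: "N (j + L - 1) p \<noteq> 0"
    and into: "act_basis K E sp (Fx_graph E sp x) (Fx_phiV E x) (Fx_phiE x) p (GE (es (j + L - 1)))
      = delta u"
    unfolding orbit by (rule mact_GE_nonzero)
  have "N (j + L) u \<noteq> 0" using u per[of j] by simp
  then obtain q where out_of: "act_basis K E sp (Fx_graph E sp x) (Fx_phiV E x) (Fx_phiE x) u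
      (GE (es (j + L))) = delta q" and q: "N (Suc (j + L)) q \<noteq> 0"
    by (rule periodic_orbit_GE_delta[OF W per \<open>0 < L\<close> orbit])
  have "length y < Fx_depth p \<or> length y < Fx_depth q"
    using into out_of unfolding u_eq by (rule Fx_real_moves_through_FWy)
  moreover have "Fx_depth u = length y" by (simp add: u_eq)
  ultimately show False using below_M[OF p] below_M[OF q] \<open>Fx_depth u = M\<close> by linarith
qed

lemma W_iso_Fx_cycle_orbit:
  fixes K :: "'k::field itself" and x :: "'e list" and F :: "('c, 'd) graph"
  assumes iso: "W_iso K E sp (Fx_graph E sp x) (Fx_phiV E x) (Fx_phiE x) F phiV phiE"
    and wf: "wf_graph E" and cyc: "is_cycle E x"
  obtains N :: "nat \<Rightarrow> 'c \<Rightarrow> 'k" where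
    "\<And>j. N j \<in> Wvec K F" and "\<And>j. N (j + length x) = N j"
    and "\<And>j. N (Suc j) = mact K E sp F phiV phiE (N j) (GE (x ! (Suc j mod length x)))"
    and "\<And>j u. N j u \<noteq> 0 \<Longrightarrow> phiV u \<in> src E ` set x"
    and "N 0 \<noteq> (\<lambda>_. 0)"
proof -
  let ?F = "Fx_graph E sp x" and ?L = "length x"
  let ?act = "act_basis K E sp ?F (Fx_phiV E x) (Fx_phiE x)"
  from iso obtain h :: "('e fvert \<Rightarrow> 'k) \<Rightarrow> ('c \<Rightarrow> 'k)"
    where bij: "bij_betw h (Wvec K ?F) (Wvec K F)"
      and smult: "\<forall>c. \<forall>m\<in>Wvec K ?F. h (\<lambda>u. c * m u) = (\<lambda>u. c * h m u)"
      and comm: "\<forall>m\<in>Wvec K ?F. \<forall>g\<in>gens E.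
        h (mact K E sp ?F (Fx_phiV E x) (Fx_phiE x) m g) = mact K E sp F phiV phiE (h m) g"
    unfolding W_iso_def by blast
  have "0 < ?L" using cyc by (rule cycle_length_pos)
  define w :: "nat \<Rightarrow> 'e fvert" where "w j = FW (Suc (j mod ?L))" for j
  define N where "N j = h (delta (w j))" for j
  have w_vert: "w j \<in> verts ?F" for j using \<open>0 < ?L\<close> by (simp add: w_def Suc_leI)
  then have delta_W: "delta (w j) \<in> Wvec K ?F" for j by (rule delta_in_Wvec)
  have act_comm: "h (?act (w j) g) = mact K E sp F phiV phiE (N j) g" if "g \<in> gens E" for j g
    using comm delta_W that unfolding N_def mact_delta[symmetric] by blast
  have x_edge: "x ! (j mod ?L) \<in> edges E" for j
    using cycle_edges[OF cyc] \<open>0 < ?L\<close> by (simp add: subset_iff)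
  show thesis
  proof
    show "N j \<in> Wvec K F" for j using bij_betwE[OF bij] delta_W unfolding N_def by blast
    show "N (j + ?L) = N j" for j by (simp add: N_def w_def)
    show "N (Suc j) = mact K E sp F phiV phiE (N j) (GE (x ! (Suc j mod ?L)))" for j
    proof -
      have "GE (x ! (Suc j mod ?L)) \<in> gens E" using x_edge by (simp add: gens_def)
      moreover have "N (Suc j) = h (?act (w j) (GE (x ! (Suc j mod ?L))))"
        unfolding N_def w_def Fx_act_cycle_edge[OF cyc] ..
      ultimately show ?thesis using act_comm by simp
    qed
    show "phiV u \<in> src E ` set x" if "N j u \<noteq> 0" for j u
    proof -
      let ?v = "Fx_phiV E x (w j)"
      have "?v \<in> verts E" using wf x_edge[of j] unfolding wf_graph_def w_def by simp
      then have "GV ?v \<in> gens E" by (simp add: gens_def)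
      moreover have "N j = h (?act (w j) (GV ?v))" unfolding N_def act_basis_GV by simp
      ultimately have "mact K E sp F phiV phiE (N j) (GV ?v) u \<noteq> 0" using act_comm that by simp
      then have "phiV u = ?v" by (rule mact_GV_nonzero)
      then show ?thesis using Fx_phiV_FW[OF cyc w_vert[of j, unfolded w_def]] by (simp add: w_def)
    qed
    have zero_W: "(\<lambda>_. 0) \<in> Wvec K ?F" by (simp add: Wvec_def)
    have "h (\<lambda>u. 0 * delta (w 0) u) = (\<lambda>u. 0 * h (delta (w 0)) u)"
      using smult delta_W[of 0] by blast
    then have "h (\<lambda>_. 0) = (\<lambda>_. 0)" by simp
    moreover have "delta (w 0) \<noteq> (\<lambda>_. 0 :: 'k)" by (rule delta_neq_zero)
    ultimately show "N 0 \<noteq> (\<lambda>_. 0)"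
      using bij_betw_imp_inj_on[OF bij] delta_W[of 0] zero_W unfolding N_def inj_on_def by metis
  qed
qed

theorem theorem6p3:
  fixes K :: "'k::field itself"
    and E :: "('v,'e) graph" and sp :: "'v \<Rightarrow> 'e"
    and x x' :: "'e list"
  assumes "wf_graph E"
    and "row_finite E"
    and "special_choice E sp"
    and "is_cycle E x"
    and "is_cycle E x'"
    and "src E ` set x \<inter> src E ` set x' = {}"
  shows "\<not> W_iso K E sp
            (Fx_graph E sp x) (Fx_phiV E x) (Fx_phiE x)
            (Fx_graph E sp x') (Fx_phiV E x') (Fx_phiE x')"
proof
  \<comment> \<open>Row-finiteness and the choice of special edges only make W(F, phi) an L(E)-module;
    the argument uses just the action of vertices and real edges.\<close>
  assume "W_iso K E sp (Fx_graph E sp x) (Fx_phiV E x) (Fx_phiE x)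
            (Fx_graph E sp x') (Fx_phiV E x') (Fx_phiE x')"
  then obtain N :: "nat \<Rightarrow> 'e fvert \<Rightarrow> 'k" where W: "\<And>j. N j \<in> Wvec K (Fx_graph E sp x')"
    and per: "\<And>j. N (j + length x) = N j"
    and orbit: "\<And>j. N (Suc j) = mact K E sp (Fx_graph E sp x') (Fx_phiV E x') (Fx_phiE x')
      (N j) (GE (x ! (Suc j mod length x)))"
    and over_x: "\<And>j u. N j u \<noteq> 0 \<Longrightarrow> Fx_phiV E x' u \<in> src E ` set x"
    and "N 0 \<noteq> (\<lambda>_. 0)"
    by (rule W_iso_Fx_cycle_orbit[OF _ assms(1,4)]) blast
  have off_cycle: "u \<notin> range FW" if "N j u \<noteq> 0" for j u
  proof
    assume "u \<in> range FW"
    moreover have "u \<in> verts (Fx_graph E sp x')" using W[of j] that unfolding Wvec_def by blast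
    ultimately have "Fx_phiV E x' u \<in> src E ` set x'" using Fx_phiV_FW[OF assms(5)] by blast
    then show False using over_x[OF that] assms(6) by blast
  qed
  show False
    by (rule Fx_no_periodic_orbit_off_cycle[OF W per cycle_length_pos[OF assms(4)] orbit])
      (erule off_cycle, fact)
qed

end
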